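(* For any standard possibility frame with awareness $\mathscr{F}=(\Omega,\sqsubseteq,\mathcal{E},\mathcal{A})$ and any $\omega,\nu\in\Omega$, we have $\nu\in\mathcal{A}(\omega)$ if and only if $\omega\in\mathbf{A}(\downarrow\nu)$.
   Context: For a poset $(\Omega,\sqsubseteq)$, $\downarrow E=\{\omega\mid\omega\sqsubseteq\nu\text{ for some }\nu\in E\}$, $\downarrow\nu=\downarrow\{\nu\}$; $\rho(E)=\{\omega\mid\forall\omega'\sqsubseteq\omega\ \exists\omega''\sqsubseteq\omega'\colon\omega''\in\downarrow E\}$; $\mathcal{RO}(\Omega,\sqsubseteq)=\{E\mid\rho(E)=E\}$, a Boolean algebra under $\subseteq$ with meet $\cap$, join $E\sqcup F=\rho(E\cup F)$, complement $\neg E=\{\omega\mid\forall\omega'\sqsubseteq\omega,\ \omega'\notin E\}$. $\max(E)=\{\omega\in E\mid\text{no }\nu\in E\text{ with }\omega\sqsubseteq\nu,\ \nu\not\sqsubseteq\omega\}$. A possibility frame $(\Omega,\sqsubseteq,\mathcal{E})$: $\mathcal{E}$ a nonempty subset of $\mathcal{RO}(\Omega,\sqsubseteq)$ closed under binary $\cap$ and $\neg$; quasi-principal: for all $E\in\mathcal{E}$ and $\omega\in E$, $\omega\in\downarrow\max(E)$. A possibility frame with awareness is $(\Omega,\sqsubseteq,\mathcal{E},\mathcal{A})$ with $(\Omega,\sqsubseteq,\mathcal{E})$ quasi-principal with a maximum element $m$ in $(\Omega,\sqsubseteq)$, and $\mathcal{A}:\Omega\to\wp(\Omega)$ such that for all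 $\omega,\omega',\nu$: $m\in\mathcal{A}(\omega)$; if $\nu\in\mathcal{A}(\omega)$ then $\downarrow\nu\in\mathcal{E}$; if $\omega'\sqsubseteq\omega$ then $\mathcal{A}(\omega)\subseteq\mathcal{A}(\omega')$; if $\nu\notin\mathcal{A}(\omega)$ then $\exists\omega'\sqsubseteq\omega\ \forall\omega''\sqsubseteq\omega'\ \nu\notin\mathcal{A}(\omega'')$; if $\nu\in\mathcal{A}(\omega)$, $E,E'\in\mathcal{E}$ and $\max(E\cap\downarrow\nu)\cup\max(E'\cap\downarrow\nu)\subseteq\mathcal{A}(\omega)$ then $\max((E\sqcup E')\cap\downarrow\nu)\subseteq\mathcal{A}(\omega)$; and $\mathcal{E}$ is closed under the operation $\mathbf{A}$ defined by: $\omega\in\mathbf{A}(E)$ iff for all $\omega'\sqsubseteq\omega$ and $\nu\in\mathcal{A}(\omega')$, $\max(E\cap\downarrow\nu)\cup\max(\neg E\cap\downarrow\nu)\subseteq\mathcal{A}(\omega')$. It is standard if for all $\omega,\nu$, $\nu\in\mathcal{A}(\omega)$ implies $\omega\in\mathbf{A}(\downarrow\nu)$. *)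

theory Defs
  imports Main
begin

text \<open>A poset is given by a carrier set Om and a relation le on it
  (le w v means w is below v, i.e. w refines v). All notions are relativised to Om.\<close>

definition poset :: "'w set \<Rightarrow> ('w \<Rightarrow> 'w \<Rightarrow> bool) \<Rightarrow> bool" where
  "poset Om le \<longleftrightarrow> (\<forall>x\<in>Om. le x x)
     \<and> (\<forall>x\<in>Om. \<forall>y\<in>Om. le x y \<and> le y x \<longrightarrow> x = y)
     \<and> (\<forall>x\<in>Om. \<forall>y\<in>Om. \<forall>z\<in>Om. le x y \<and> le y z \<longrightarrow> le x z)"

definition down :: "'w set \<Rightarrow> ('w \<Rightarrow> 'w \<Rightarrow> bool) \<Rightarrow> 'w set \<Rightarrow> 'w set" where
  "down Om le E = {w \<in> Om. \<exists>v\<in>E. le w v}"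

definition rho :: "'w set \<Rightarrow> ('w \<Rightarrow> 'w \<Rightarrow> bool) \<Rightarrow> 'w set \<Rightarrow> 'w set" where
  "rho Om le E = {w \<in> Om. \<forall>w'\<in>Om. le w' w \<longrightarrow>
                     (\<exists>w''\<in>Om. le w'' w' \<and> w'' \<in> down Om le E)}"

definition RO :: "'w set \<Rightarrow> ('w \<Rightarrow> 'w \<Rightarrow> bool) \<Rightarrow> 'w set set" where
  "RO Om le = {E. E \<subseteq> Om \<and> rho Om le E = E}"

definition join :: "'w set \<Rightarrow> ('w \<Rightarrow> 'w \<Rightarrow> bool) \<Rightarrow> 'w set \<Rightarrow> 'w set \<Rightarrow> 'w set" where
  "join Om le E F = rho Om le (E \<union> F)"

definition neg :: "'w set \<Rightarrow> ('w \<Rightarrow> 'w \<Rightarrow> bool) \<Rightarrow> 'w set \<Rightarrow> 'w set" where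
  "neg Om le E = {w \<in> Om. \<forall>w'\<in>Om. le w' w \<longrightarrow> w' \<notin> E}"

definition maxl :: "('w \<Rightarrow> 'w \<Rightarrow> bool) \<Rightarrow> 'w set \<Rightarrow> 'w set" where
  "maxl le E = {w \<in> E. \<not> (\<exists>v\<in>E. le w v \<and> \<not> le v w)}"

definition possibility_frame :: "'w set \<Rightarrow> ('w \<Rightarrow> 'w \<Rightarrow> bool) \<Rightarrow> 'w set set \<Rightarrow> bool" where
  "possibility_frame Om le Ev \<longleftrightarrow> poset Om le \<and> Ev \<noteq> {} \<and> Ev \<subseteq> RO Om le
     \<and> (\<forall>E\<in>Ev. \<forall>F\<in>Ev. E \<inter> F \<in> Ev) \<and> (\<forall>E\<in>Ev. neg Om le E \<in> Ev)"

definition quasi_principal :: "'w set \<Rightarrow> ('w \<Rightarrow> 'w \<Rightarrow> bool) \<Rightarrow> 'w set set \<Rightarrow> bool" where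
  "quasi_principal Om le Ev \<longleftrightarrow> (\<forall>E\<in>Ev. \<forall>w\<in>E. w \<in> down Om le (maxl le E))"

definition Aop :: "'w set \<Rightarrow> ('w \<Rightarrow> 'w \<Rightarrow> bool) \<Rightarrow> ('w \<Rightarrow> 'w set) \<Rightarrow> 'w set \<Rightarrow> 'w set" where
  "Aop Om le Aw E = {w \<in> Om. \<forall>w'\<in>Om. le w' w \<longrightarrow> (\<forall>v\<in>Aw w'.
      maxl le (E \<inter> down Om le {v}) \<union> maxl le (neg Om le E \<inter> down Om le {v}) \<subseteq> Aw w')}"

definition frame_with_awareness ::
  "'w set \<Rightarrow> ('w \<Rightarrow> 'w \<Rightarrow> bool) \<Rightarrow> 'w set set \<Rightarrow> ('w \<Rightarrow> 'w set) \<Rightarrow> bool" where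
  "frame_with_awareness Om le Ev Aw \<longleftrightarrow>
     possibility_frame Om le Ev \<and> quasi_principal Om le Ev
   \<and> (\<exists>m\<in>Om. (\<forall>w\<in>Om. le w m) \<and> (\<forall>w\<in>Om. m \<in> Aw w))
   \<and> (\<forall>w\<in>Om. Aw w \<subseteq> Om)
   \<and> (\<forall>w\<in>Om. \<forall>v\<in>Aw w. down Om le {v} \<in> Ev)
   \<and> (\<forall>w\<in>Om. \<forall>w'\<in>Om. le w' w \<longrightarrow> Aw w \<subseteq> Aw w')
   \<and> (\<forall>w\<in>Om. \<forall>v\<in>Om. v \<notin> Aw w \<longrightarrow>
        (\<exists>w'\<in>Om. le w' w \<and> (\<forall>w''\<in>Om. le w'' w' \<longrightarrow> v \<notin> Aw w'')))
   \<and> (\<forall>w\<in>Om. \<forall>v\<in>Aw w. \<forall>E\<in>Ev. \<forall>E'\<in>Ev.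
        maxl le (E \<inter> down Om le {v}) \<union> maxl le (E' \<inter> down Om le {v}) \<subseteq> Aw w \<longrightarrow>
        maxl le (join Om le E E' \<inter> down Om le {v}) \<subseteq> Aw w)
   \<and> (\<forall>E\<in>Ev. Aop Om le Aw E \<in> Ev)"

definition standard_frame ::
  "'w set \<Rightarrow> ('w \<Rightarrow> 'w \<Rightarrow> bool) \<Rightarrow> 'w set set \<Rightarrow> ('w \<Rightarrow> 'w set) \<Rightarrow> bool" where
  "standard_frame Om le Ev Aw \<longleftrightarrow> frame_with_awareness Om le Ev Aw
     \<and> (\<forall>w\<in>Om. \<forall>v\<in>Om. v \<in> Aw w \<longrightarrow> w \<in> Aop Om le Aw (down Om le {v}))"

end

theory Submission
  imports Defs
begin

text \<open>Standardness is exactly the left-to-right direction. The converse holds in every frame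
  with awareness: if \<open>\<nu> \<notin> \<A>(\<omega>)\<close>, refine \<open>\<omega>\<close> to some \<open>\<omega>'\<close> where \<open>\<nu>\<close> stays unavailable.
  The maximum \<open>m\<close> is available at \<open>\<omega>'\<close>, so \<open>\<omega> \<in> \<^bold>A(\<down>\<nu>)\<close> puts
  \<open>max(\<down>\<nu> \<inter> \<down>m) = max(\<down>\<nu>) \<ni> \<nu>\<close> into \<open>\<A>(\<omega>')\<close>, a contradiction.\<close>

lemma self_in_maxl_down:
  assumes "v \<in> Om" and "le v v"
  shows "v \<in> maxl le (down Om le {v})"
  using assms unfolding maxl_def down_def by auto

lemma down_inter_down_top:
  assumes "\<forall>x\<in>Om. le x m"
  shows "down Om le {v} \<inter> down Om le {m} = down Om le {v}"
  using assms unfolding down_def by auto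

lemma AopD:
  assumes "w \<in> Aop Om le Aw E" and "w' \<in> Om" and "le w' w" and "u \<in> Aw w'"
  shows "maxl le (E \<inter> down Om le {u}) \<subseteq> Aw w'"
  using assms unfolding Aop_def by blast

lemma frame_with_awareness_refl:
  assumes "frame_with_awareness Om le Ev Aw" and "x \<in> Om"
  shows "le x x"
proof -
  have "poset Om le"
    using assms(1) by (simp add: frame_with_awareness_def possibility_frame_def)
  then show ?thesis
    using assms(2) by (simp add: poset_def)
qed

lemma frame_with_awareness_top:
  assumes "frame_with_awareness Om le Ev Aw"
  obtains m where "\<forall>x\<in>Om. le x m" and "\<forall>x\<in>Om. m \<in> Aw x"
proof -
  have "\<exists>m\<in>Om. (\<forall>x\<in>Om. le x m) \<and> (\<forall>x\<in>Om. m \<in> Aw x)"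
    using assms by (simp add: frame_with_awareness_def)
  then show thesis
    using that by blast
qed

lemma frame_with_awareness_unaware_refine:
  assumes "frame_with_awareness Om le Ev Aw" and "w \<in> Om" and "v \<in> Om" and "v \<notin> Aw w"
  obtains w' where "w' \<in> Om" and "le w' w" and "v \<notin> Aw w'"
proof -
  have "\<forall>w\<in>Om. \<forall>v\<in>Om. v \<notin> Aw w \<longrightarrow>
      (\<exists>w'\<in>Om. le w' w \<and> (\<forall>w''\<in>Om. le w'' w' \<longrightarrow> v \<notin> Aw w''))"
    using assms(1) by (simp add: frame_with_awareness_def)
  with assms(2-4) obtain w' where "w' \<in> Om" "le w' w" "\<forall>w''\<in>Om. le w'' w' \<longrightarrow> v \<notin> Aw w''"
    by blast
  moreover have "le w' w'"
    using frame_with_awareness_refl[OF assms(1) \<open>w' \<in> Om\<close>] .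
  ultimately show thesis
    using that by blast
qed

lemma aware_if_in_Aop_down:
  assumes frame: "frame_with_awareness Om le Ev Aw"
    and "w \<in> Om" and "v \<in> Om" and in_Aop: "w \<in> Aop Om le Aw (down Om le {v})"
  shows "v \<in> Aw w"
proof (rule ccontr)
  assume "v \<notin> Aw w"
  with frame \<open>w \<in> Om\<close> \<open>v \<in> Om\<close> obtain w' where w': "w' \<in> Om" "le w' w" "v \<notin> Aw w'"
    by (rule frame_with_awareness_unaware_refine)
  obtain m where top: "\<forall>x\<in>Om. le x m" and m_aware: "\<forall>x\<in>Om. m \<in> Aw x"
    using frame by (rule frame_with_awareness_top)
  have "m \<in> Aw w'"
    using m_aware w'(1) by blast
  then have "maxl le (down Om le {v} \<inter> down Om le {m}) \<subseteq> Aw w'"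
    by (rule AopD[OF in_Aop w'(1,2)])
  then have "maxl le (down Om le {v}) \<subseteq> Aw w'"
    using down_inter_down_top[of Om le m v] top by simp
  moreover have "v \<in> maxl le (down Om le {v})"
    using \<open>v \<in> Om\<close> frame_with_awareness_refl[OF frame \<open>v \<in> Om\<close>] by (rule self_in_maxl_down)
  ultimately show False
    using w'(3) by blast
qed

theorem lemma3p5:
  fixes Om :: "'w set" and le :: "'w \<Rightarrow> 'w \<Rightarrow> bool"
    and Ev :: "'w set set" and Aw :: "'w \<Rightarrow> 'w set"
  assumes "standard_frame Om le Ev Aw"
    and "w \<in> Om" and "v \<in> Om"
  shows "v \<in> Aw w \<longleftrightarrow> w \<in> Aop Om le Aw (down Om le {v})"
proof
  show "w \<in> Aop Om le Aw (down Om le {v})" if "v \<in> Aw w"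
    using assms that by (simp add: standard_frame_def)
  have frame: "frame_with_awareness Om le Ev Aw"
    using assms(1) by (simp add: standard_frame_def)
  show "v \<in> Aw w" if "w \<in> Aop Om le Aw (down Om le {v})"
    using frame assms(2,3) that by (rule aware_if_in_Aop_down)
qed

end
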